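(* Suppose $(\Omega,\mathcal{F},\mathsf{P})$ is atomless and $u$ is a law invariant coherent utility on $L^0$ with determining set $\mathcal{D}$. Let $Y$ be a random variable or random vector. Then for every $X\in L^1_s(\mathcal{D})$, $$u^f(X;Y)=u(\mathsf{E}(X\mid Y)).$$
   Context: Let $(\Omega,\mathcal{F},\mathsf{P})$ be a probability space, $L^0$ the space of all real random variables, and $\mathcal{P}$ the set of probability measures on $\mathcal{F}$ absolutely continuous with respect to $\mathsf{P}$; measures $\mathsf{Q}\in\mathcal{P}$ are identified with their densities. For $\mathsf{Q}\in\mathcal{P}$ and $X\in L^0$, $\mathsf{E}_\mathsf{Q}X:=\mathsf{E}_\mathsf{Q}X^+-\mathsf{E}_\mathsf{Q}X^-$ with the convention $\infty-\infty=-\infty$. A coherent utility on $L^0$ is a map $u:L^0\to[-\infty,\infty]$ of the form $u(X)=\inf_{\mathsf{Q}\in\mathcal{D}}\mathsf{E}_\mathsf{Q}X$ for a nonempty $\mathcal{D}\subseteq\mathcal{P}$; its determining set is the largest such set, $\{\mathsf{Q}\in\mathcal{P}:\mathsf{E}_\mathsf{Q}X\ge u(X)\ \forall X\in L^0\}$. $u$ is law invariant if $u(X)=u(X')$ whenever $X$ and $X'$ have the same distribution. For $\mathcal{C}\subseteq\mathcal{P}$, $L^1_s(\mathcal{C})=\{X\in L^0:\lim_{n\to\infty}\sup_{\mathsf{Q}\in\mathcal{C}}\mathsf{E}_\mathsf{Q}|X|I(|X|>n)=0\}$. For a random vector $Y$, $\mathsf{E}(\mathcal{D}\mid Y):=\{\mathsf{E}(Z\mid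 Y):Z\in\mathcal{D}\}$ and the factor utility is $u^f(X;Y):=\inf_{\mathsf{Q}\in\mathsf{E}(\mathcal{D}\mid Y)}\mathsf{E}_\mathsf{Q}X$. *)

theory Defs
  imports "HOL-Probability.Probability"
begin

text \<open>Probability measures absolutely continuous w.r.t. P, identified with their densities.\<close>
definition densities :: "'a measure \<Rightarrow> ('a \<Rightarrow> real) set" where
  "densities M = {Z. Z \<in> borel_measurable M \<and> (\<forall>x\<in>space M. 0 \<le> Z x)
                     \<and> integrable M Z \<and> integral\<^sup>L M Z = 1}"

text \<open>E_Q X = E_Q X^+ - E_Q X^- with the convention infinity - infinity = -infinity.\<close>
definition EQ :: "'a measure \<Rightarrow> ('a \<Rightarrow> real) \<Rightarrow> ('a \<Rightarrow> real) \<Rightarrow> ereal" where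
  "EQ M Z X =
    (let p = (\<integral>\<^sup>+ x. ennreal (Z x * max (X x) 0) \<partial>M);
         n = (\<integral>\<^sup>+ x. ennreal (Z x * max (- X x) 0) \<partial>M)
     in if n = \<top> then - \<infinity> else enn2ereal p - enn2ereal n)"

definition coherent_utility :: "'a measure \<Rightarrow> (('a \<Rightarrow> real) \<Rightarrow> ereal) \<Rightarrow> bool" where
  "coherent_utility M u \<longleftrightarrow>
     (\<exists>D. D \<noteq> {} \<and> D \<subseteq> densities M \<and>
          (\<forall>X\<in>borel_measurable M. u X = (INF Z\<in>D. EQ M Z X)))"

definition determining_set :: "'a measure \<Rightarrow> (('a \<Rightarrow> real) \<Rightarrow> ereal) \<Rightarrow> ('a \<Rightarrow> real) set" where
  "determining_set M u = {Z \<in> densities M. \<forall>X\<in>borel_measurable M. u X \<le> EQ M Z X}"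

definition law_invariant :: "'a measure \<Rightarrow> (('a \<Rightarrow> real) \<Rightarrow> ereal) \<Rightarrow> bool" where
  "law_invariant M u \<longleftrightarrow>
     (\<forall>X\<in>borel_measurable M. \<forall>X'\<in>borel_measurable M.
        distr M borel X = distr M borel X' \<longrightarrow> u X = u X')"

definition atomless :: "'a measure \<Rightarrow> bool" where
  "atomless M \<longleftrightarrow>
     (\<forall>A\<in>sets M. 0 < measure M A \<longrightarrow>
        (\<exists>B\<in>sets M. B \<subseteq> A \<and> 0 < measure M B \<and> measure M B < measure M A))"

definition L1s :: "'a measure \<Rightarrow> ('a \<Rightarrow> real) set \<Rightarrow> ('a \<Rightarrow> real) set" where
  "L1s M C = {X \<in> borel_measurable M.
     (\<lambda>n::nat. SUP Z\<in>C. \<integral>\<^sup>+ x. ennreal (Z x * (if \<bar>X x\<bar> > real n then \<bar>X x\<bar> else 0)) \<partial>M)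
       \<longlonglongrightarrow> 0}"

definition cond_exp_given :: "'a measure \<Rightarrow> ('a \<Rightarrow> 'b::topological_space) \<Rightarrow> ('a \<Rightarrow> real) \<Rightarrow> ('a \<Rightarrow> real)" where
  "cond_exp_given M Y X = real_cond_exp M (vimage_algebra (space M) Y borel) X"

definition factor_utility ::
  "'a measure \<Rightarrow> ('a \<Rightarrow> real) set \<Rightarrow> ('a \<Rightarrow> real) \<Rightarrow> ('a \<Rightarrow> 'b::topological_space) \<Rightarrow> ereal" where
  "factor_utility M D X Y = (INF Q\<in>(\<lambda>Z. cond_exp_given M Y Z) ` D. EQ M Q X)"

end

theory Submission
  imports Defs
begin

text \<open>
  Let G be the sigma-algebra generated by Y. Conditional expectation is self-adjoint,
  E[E(Z|G) X] = E[Z E(X|G)], so the infimum over Z in D defining u^f(X;Y) equals the one defining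
  u(E(X|G)), provided both products are integrable; this reduces to E[E(Z|G) |X|] < \<infinity>.
  Here atomlessness and law invariance enter. By the bathtub principle, the integral of E(Z|G) over
  any set B is at most the integral of Z over an upper level set of Z of measure P(B). Approximate |X|
  by layer sums \<Sum> d 1_{A_k} with decreasing layers A_k and replace the layers by nested upper level
  sets U_k of Z with P(U_k) = P(A_k), which exist on an atomless space. The new layer sum has the same
  law, so law invariance of u bounds E[Z \<Sum> d 1_{U_k}], and with it E[E(Z|G) |X|], by the
  supremum over Z' in D of E[Z' |X|], which is finite for X in L^1_s(D).
\<close>

section \<open>Atomless probability spaces\<close>

lemma atomless_exists_small_subset:
  assumes "prob_space M" "atomless M" "A \<in> sets M" "0 < measure M A" "0 < e"
  shows "\<exists>B\<in>sets M. B \<subseteq> A \<and> 0 < measure M B \<and> measure M B < e"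
proof -
  interpret prob_space M by fact
  have halving: "\<exists>B\<in>sets M. B \<subseteq> A \<and> 0 < measure M B \<and> measure M B \<le> measure M A / 2 ^ n" for n
  proof (induction n)
    case 0
    then show ?case using assms by auto
  next
    case (Suc n)
    then obtain B where B: "B \<in> sets M" "B \<subseteq> A" "0 < measure M B" "measure M B \<le> measure M A / 2 ^ n"
      by blast
    then obtain B' where B': "B' \<in> sets M" "B' \<subseteq> B" "0 < measure M B'" "measure M B' < measure M B"
      using \<open>atomless M\<close> unfolding atomless_def by blast
    have "measure M (B - B') = measure M B - measure M B'"
      using B B' by (simp add: finite_measure_Diff)
    moreover have "measure M B / 2 \<le> measure M A / 2 ^ Suc n"
      using B(4) by simp
    ultimately show ?case
    proof (cases "measure M B' \<le> measure M B / 2")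
      case True
      then show ?thesis using B B' \<open>measure M B / 2 \<le> _\<close> by (intro bexI[of _ B']) auto
    next
      case False
      then show ?thesis using B B' \<open>measure M B / 2 \<le> _\<close> \<open>measure M (B - B') = _\<close>
        by (intro bexI[of _ "B - B'"]) auto
    qed
  qed
  obtain n where n: "(1/2::real) ^ n < e" using real_arch_pow_inv[OF \<open>0 < e\<close>] by force
  obtain B where B: "B \<in> sets M" "B \<subseteq> A" "0 < measure M B" "measure M B \<le> measure M A / 2 ^ n"
    using halving by blast
  have "measure M A / 2 ^ n \<le> (1/2) ^ n"
    by (simp add: power_divide divide_right_mono)
  then show ?thesis using B n by (intro bexI[of _ B]) auto
qed

lemma finite_measure_exists_half_maximal:
  assumes "finite_measure M" "S \<subseteq> sets M" "{} \<in> S"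
  shows "\<exists>D\<in>S. \<forall>D'\<in>S. measure M D' \<le> 2 * measure M D"
proof -
  interpret finite_measure M by fact
  define s where "s = (SUP D\<in>S. measure M D)"
  have bdd: "bdd_above (measure M ` S)"
    using assms(2) by (intro bdd_aboveI[of _ "measure M (space M)"]) (auto intro: bounded_measure)
  then have s_ge: "measure M D \<le> s" if "D \<in> S" for D
    unfolding s_def using that by (rule cSUP_upper2) simp
  show ?thesis
  proof (cases "s = 0")
    case True
    then show ?thesis using s_ge \<open>{} \<in> S\<close> by (intro bexI[of _ "{}"]) auto
  next
    case False
    then have "s / 2 < s" using s_ge[OF \<open>{} \<in> S\<close>] by simp
    then obtain D where "D \<in> S" "s / 2 < measure M D"
      unfolding s_def using \<open>{} \<in> S\<close> by (subst (asm) less_cSUP_iff) (auto simp: bdd)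
    then show ?thesis using s_ge by (intro bexI[of _ D]) force+
  qed
qed

lemma atomless_exists_subset_measure:
  assumes P: "prob_space M" and al: "atomless M"
    and C: "C \<in> sets M" and q: "0 \<le> q" "q \<le> measure M C"
  shows "\<exists>B\<in>sets M. B \<subseteq> C \<and> measure M B = q"
proof -
  interpret prob_space M by fact
  define good where "good B \<longleftrightarrow> B \<in> sets M \<and> B \<subseteq> C \<and> measure M B \<le> q" for B
  define cand where "cand B = {D \<in> sets M. D \<subseteq> C - B \<and> measure M B + measure M D \<le> q}" for B
  \<comment> \<open>greedy steps, each adding a candidate of at least half the largest possible measure\<close>
  have "\<exists>Bs. \<forall>n. good (Bs n) \<and> Bs n \<subseteq> Bs (Suc n) \<and>
      (\<forall>D\<in>cand (Bs n). measure M D / 2 \<le> measure M (Bs (Suc n)) - measure M (Bs n))"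
  proof (rule dependent_nat_choice)
    show "\<exists>B. good B" using q by (intro exI[of _ "{}"]) (simp add: good_def)
  next
    fix B :: "'a set" and n :: nat
    assume B: "good B"
    obtain D0 where D0: "D0 \<in> cand B" "\<And>D. D \<in> cand B \<Longrightarrow> measure M D \<le> 2 * measure M D0"
      using finite_measure_exists_half_maximal[of M "cand B"] B
      by (auto simp: cand_def good_def finite_measure_axioms)
    have "measure M (B \<union> D0) = measure M B + measure M D0"
      using B D0 by (intro finite_measure_Union) (auto simp: cand_def good_def)
    moreover from this have "good (B \<union> D0)"
      using B D0 by (auto simp: good_def cand_def)
    ultimately show "\<exists>B'. good B' \<and> B \<subseteq> B' \<and>
        (\<forall>D\<in>cand B. measure M D / 2 \<le> measure M B' - measure M B)"
      using D0 by (intro exI[of _ "B \<union> D0"]) (auto simp: mult.commute)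
  qed
  then obtain Bs where Bs: "\<And>n. good (Bs n)" "\<And>n. Bs n \<subseteq> Bs (Suc n)"
    and gain: "\<And>n D. D \<in> cand (Bs n) \<Longrightarrow> measure M D / 2 \<le> measure M (Bs (Suc n)) - measure M (Bs n)"
    by blast
  define B where "B = (\<Union>n. Bs n)"
  have Bs_sets: "range Bs \<subseteq> sets M" using Bs by (auto simp: good_def)
  then have B_sets: "B \<in> sets M" unfolding B_def by auto
  have lim: "(\<lambda>n. measure M (Bs n)) \<longlonglongrightarrow> measure M B"
    unfolding B_def by (rule finite_Lim_measure_incseq[OF Bs_sets incseq_SucI[of Bs, OF Bs(2)]])
  have "B \<subseteq> C" using Bs by (auto simp: B_def good_def)
  have "measure M B \<le> q"
    using Bs by (intro LIMSEQ_le_const2[OF lim]) (auto simp: good_def)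
  moreover have "\<not> measure M B < q"
  proof
    assume lt: "measure M B < q"
    have "measure M (C - B) = measure M C - measure M B"
      using \<open>B \<subseteq> C\<close> B_sets C by (simp add: finite_measure_Diff)
    then obtain D where D: "D \<in> sets M" "D \<subseteq> C - B" "0 < measure M D" "measure M D < q - measure M B"
      using atomless_exists_small_subset[OF P al, of "C - B" "q - measure M B"] C B_sets lt q by auto
    \<comment> \<open>\<open>D\<close> stays a candidate forever, so every step gains at least half its measure\<close>
    have "D \<in> cand (Bs n)" for n
    proof -
      have "measure M (Bs n) \<le> measure M B"
        unfolding B_def by (intro finite_measure_mono) (use B_sets B_def in auto)
      moreover have "D \<subseteq> C - Bs n" using D(2) unfolding B_def by blast
      ultimately show ?thesis using D(1,4) by (simp add: cand_def)
    qed
    then have "measure M D / 2 \<le> measure M (Bs (Suc n)) - measure M (Bs n)" for n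
      by (rule gain)
    moreover have "(\<lambda>n. measure M (Bs (Suc n)) - measure M (Bs n)) \<longlonglongrightarrow> 0"
      using tendsto_diff[OF LIMSEQ_Suc[OF lim] lim] by simp
    ultimately have "measure M D / 2 \<le> 0"
      by (intro LIMSEQ_le_const[of _ 0]) auto
    then show False using D by simp
  qed
  ultimately show ?thesis using B_sets \<open>B \<subseteq> C\<close> by (intro bexI[of _ B]) auto
qed

lemma (in real_distribution) exists_quantile_cdf:
  assumes "0 < q" "q < 1"
  shows "\<exists>t. measure M {..<t} \<le> q \<and> q \<le> cdf M t"
proof -
  define S where "S = {s. q \<le> cdf M s}"
  have "\<forall>\<^sub>F s in at_top. q < cdf M s"
    using cdf_lim_at_top_prob by (rule order_tendstoD(1)) (use \<open>q < 1\<close> in simp)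
  then obtain s0 where "q < cdf M s0" by (meson eventually_at_top_linorder order_refl)
  then have "s0 \<in> S" by (simp add: S_def)
  have "\<forall>\<^sub>F s in at_bot. cdf M s < q"
    using cdf_lim_at_bot by (rule order_tendstoD(2)) (use \<open>0 < q\<close> in simp)
  then obtain s1 where s1: "\<And>s. s \<le> s1 \<Longrightarrow> cdf M s < q" by (auto simp: eventually_at_bot_linorder)
  have bdd: "bdd_below S"
    by (rule bdd_belowI[of _ s1]) (metis S_def mem_Collect_eq nle_le not_less s1)
  define t where "t = Inf S"
  have "\<forall>\<^sub>F s in at_right t. q \<le> cdf M s"
  proof (rule eventually_mono[OF eventually_at_right_less])
    fix s assume "t < s"
    then obtain s' where "s' \<in> S" "s' < s"
      using cInf_less_iff[of S s] \<open>s0 \<in> S\<close> bdd unfolding t_def by blast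
    then show "q \<le> cdf M s" unfolding S_def using cdf_nondecreasing[of s' s] by auto
  qed
  then have "q \<le> cdf M t"
    using cdf_is_right_cont[of t] unfolding continuous_within by (intro tendsto_lowerbound) auto
  have "\<forall>\<^sub>F s in at_left t. s \<in> {t - 1<..<t}"
    by (rule eventually_at_left_real) simp
  then have "\<forall>\<^sub>F s in at_left t. cdf M s \<le> q"
  proof (rule eventually_mono)
    fix s assume "s \<in> {t - 1<..<t}"
    then have "s \<notin> S" unfolding t_def using bdd cInf_lower not_le by fastforce
    then show "cdf M s \<le> q" by (simp add: S_def)
  qed
  then have "measure M {..<t} \<le> q"
    by (intro tendsto_upperbound[OF cdf_at_left]) auto
  with \<open>q \<le> cdf M t\<close> show ?thesis by blast
qed

lemma exists_quantile:
  fixes Z :: "'a \<Rightarrow> real"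
  assumes "prob_space M" and Z[measurable]: "Z \<in> borel_measurable M" and "0 < p" "p < 1"
  shows "\<exists>t. measure M {x\<in>space M. t < Z x} \<le> p \<and> p \<le> measure M {x\<in>space M. t \<le> Z x}"
proof -
  interpret prob_space M by fact
  interpret D: real_distribution "distr M borel Z" by simp
  obtain t where t: "measure (distr M borel Z) {..<t} \<le> 1 - p" "1 - p \<le> cdf (distr M borel Z) t"
    using D.exists_quantile_cdf[of "1 - p"] assms(3,4) by auto
  have "cdf (distr M borel Z) t = measure M (space M - {x\<in>space M. t < Z x})"
    unfolding cdf_def by (simp add: measure_distr vimage_def Int_def) (intro arg_cong[where f="measure M"]; auto)
  moreover have "measure (distr M borel Z) {..<t} = measure M (space M - {x\<in>space M. t \<le> Z x})"
    by (simp add: measure_distr vimage_def Int_def) (intro arg_cong[where f="measure M"]; auto)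
  ultimately show ?thesis using t by (intro exI[of _ t]) (simp add: prob_compl)
qed

section \<open>Upper level sets and the bathtub principle\<close>

definition upper_set :: "'a measure \<Rightarrow> ('a \<Rightarrow> real) \<Rightarrow> 'a set \<Rightarrow> bool" where
  "upper_set M Z U \<longleftrightarrow> U \<subseteq> space M \<and> (\<forall>x\<in>U. \<forall>y\<in>space M - U. Z y \<le> Z x)"

lemma exists_upper_subset:
  fixes Z :: "'a \<Rightarrow> real"
  assumes P: "prob_space M" and al: "atomless M" and Zm[measurable]: "Z \<in> borel_measurable M"
    and R: "R \<in> sets M" "upper_set M Z R" and p: "0 \<le> p" "p \<le> measure M R"
  shows "\<exists>U\<in>sets M. upper_set M Z U \<and> U \<subseteq> R \<and> measure M U = p"
proof -
  interpret prob_space M by fact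
  consider "p = 0" | "p = measure M R" | "0 < p" "p < measure M R"
    using p by linarith
  then show ?thesis
  proof cases
    case 1
    then show ?thesis by (intro bexI[of _ "{}"]) (auto simp: upper_set_def)
  next
    case 2
    then show ?thesis using R by auto
  next
    case 3
    then obtain t where t: "measure M {x\<in>space M. t < Z x} \<le> p" "p \<le> measure M {x\<in>space M. t \<le> Z x}"
      using exists_quantile[OF P Zm, of p] prob_le_1[of R] by auto
    \<comment> \<open>fill up \<open>{Z > t} \<inter> R\<close> with part of the tie set \<open>{Z = t} \<inter> R\<close>\<close>
    define A where "A = {x\<in>space M. t < Z x} \<inter> R"
    define C where "C = {x\<in>space M. t \<le> Z x} \<inter> R"
    have [measurable]: "A \<in> sets M" "C \<in> sets M" unfolding A_def C_def using R by auto
    have "A \<subseteq> C" unfolding A_def C_def by auto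
    have "measure M A \<le> measure M {x\<in>space M. t < Z x}"
      unfolding A_def by (intro finite_measure_mono) auto
    then have "measure M A \<le> p" using t(1) by linarith
    moreover have "p \<le> measure M C"
    proof -
      have "R \<subseteq> {x\<in>space M. t \<le> Z x} \<or> {x\<in>space M. t \<le> Z x} \<subseteq> R"
        using R(2) unfolding upper_set_def by force
      then have "C = R \<or> C = {x\<in>space M. t \<le> Z x}" unfolding C_def by blast
      then show ?thesis using 3 t(2) by auto
    qed
    moreover have "measure M (C - A) = measure M C - measure M A"
      using \<open>A \<subseteq> C\<close> by (simp add: finite_measure_Diff)
    ultimately obtain S where S: "S \<in> sets M" "S \<subseteq> C - A" "measure M S = p - measure M A"
      using atomless_exists_subset_measure[OF P al, of "C - A" "p - measure M A"] by auto
    have "upper_set M Z (A \<union> S)"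
      using S R(2) unfolding upper_set_def A_def C_def by (auto simp: not_less)
    moreover have "measure M (A \<union> S) = p"
      using S by (subst finite_measure_Union) auto
    moreover have "A \<union> S \<subseteq> R" using S unfolding A_def C_def by auto
    ultimately show ?thesis using S by (intro bexI[of _ "A \<union> S"]) auto
  qed
qed

lemma exists_upper_set_chain:
  fixes Z :: "'a \<Rightarrow> real" and p :: "nat \<Rightarrow> real"
  assumes P: "prob_space M" and al: "atomless M" and Zm: "Z \<in> borel_measurable M"
    and p: "decseq p" "\<And>k. 0 \<le> p k" "p 0 \<le> 1"
  shows "\<exists>U. decseq U \<and> (\<forall>k. U k \<in> sets M \<and> upper_set M Z (U k) \<and> measure M (U k) = p k)"
proof -
  interpret prob_space M by fact
  have "\<exists>U. \<forall>k. (U k \<in> sets M \<and> upper_set M Z (U k) \<and> measure M (U k) = p k) \<and> U (Suc k) \<subseteq> U k"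
  proof (rule dependent_nat_choice)
    have space: "upper_set M Z (space M)" by (simp add: upper_set_def)
    show "\<exists>U. U \<in> sets M \<and> upper_set M Z U \<and> measure M U = p 0"
      using exists_upper_subset[OF P al Zm _ space, of "p 0"] p by (auto simp: prob_space)
  next
    fix U k assume "U \<in> sets M \<and> upper_set M Z U \<and> measure M U = p k"
    then show "\<exists>V. (V \<in> sets M \<and> upper_set M Z V \<and> measure M V = p (Suc k)) \<and> V \<subseteq> U"
      using exists_upper_subset[OF P al Zm, of U "p (Suc k)"] p decseq_SucD[OF p(1), of k] by auto
  qed
  then show ?thesis by (auto intro: decseq_SucI)
qed

lemma upper_set_threshold:
  fixes Z :: "'a \<Rightarrow> real"
  assumes U: "upper_set M Z U" "U \<noteq> {}" and Z: "\<And>x. x \<in> space M \<Longrightarrow> 0 \<le> Z x"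
  obtains t where "\<And>x. x \<in> U \<Longrightarrow> t \<le> Z x" "\<And>x. x \<in> space M - U \<Longrightarrow> Z x \<le> t"
proof (cases "space M \<subseteq> U")
  case True
  then show thesis using U Z by (intro that[of 0]) (auto simp: upper_set_def)
next
  case False
  then obtain y where "y \<in> space M" "y \<notin> U" by auto
  then have bdd: "bdd_below (Z ` U)"
    using U unfolding upper_set_def by (intro bdd_belowI[of _ "Z y"]) auto
  show thesis
  proof (rule that[of "Inf (Z ` U)"])
    show "Inf (Z ` U) \<le> Z x" if "x \<in> U" for x using that bdd by (intro cInf_lower) auto
    show "Z x \<le> Inf (Z ` U)" if "x \<in> space M - U" for x
      using U that unfolding upper_set_def by (intro cInf_greatest) auto
  qed
qed

lemma bathtub_principle:
  fixes Z h :: "'a \<Rightarrow> real"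
  assumes P: "prob_space M" and Zi: "integrable M Z" and Zp: "\<And>x. x \<in> space M \<Longrightarrow> 0 \<le> Z x"
    and U: "U \<in> sets M" "upper_set M Z U"
    and hm[measurable]: "h \<in> borel_measurable M" and h01: "AE x in M. 0 \<le> h x \<and> h x \<le> 1"
    and hint: "integral\<^sup>L M h = measure M U"
  shows "(\<integral>x. Z x * h x \<partial>M) \<le> (\<integral>x. Z x * indicator U x \<partial>M)"
proof -
  interpret prob_space M by fact
  have [measurable]: "Z \<in> borel_measurable M" using Zi by auto
  have Zh: "integrable M (\<lambda>x. Z x * h x)"
    using h01 by (intro Bochner_Integration.integrable_bound[OF Zi]) (auto simp: abs_mult intro!: mult_left_le)
  have hi: "integrable M h"
    using h01 by (intro integrable_const_bound[of _ 1]) auto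
  have ZU: "integrable M (\<lambda>x. Z x * indicator U x)"
    using U Zi by (intro integrable_real_mult_indicator) auto
  have iU: "integrable M (\<lambda>x. indicator U x :: real)"
    using U by (intro integrable_real_indicator) (auto simp: less_top[symmetric])
  show ?thesis
  proof (cases "U = {}")
    case True
    then have "AE x in M. h x = 0"
      using hint hi h01 by (subst integral_nonneg_eq_0_iff_AE[symmetric]) auto
    then have "AE x in M. Z x * h x = 0" by eventually_elim auto
    then show ?thesis using True by (simp add: integral_eq_zero_AE)
  next
    case False
    then obtain t where tU: "\<And>x. x \<in> U \<Longrightarrow> t \<le> Z x" and tnU: "\<And>x. x \<in> space M - U \<Longrightarrow> Z x \<le> t"
      using upper_set_threshold[OF U(2) _ Zp] by blast
    \<comment> \<open>the correction term \<open>t (h - 1\<^sub>U)\<close> integrates to 0\<close>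
    have "AE x in M. Z x * h x \<le> Z x * indicator U x + t * (h x - indicator U x)"
      using h01 AE_space
    proof eventually_elim
      case (elim x)
      show ?case
      proof (cases "x \<in> U")
        case True
        then have "t * (1 - h x) \<le> Z x * (1 - h x)" using elim tU[of x] by (intro mult_right_mono) auto
        then show ?thesis using True by (simp add: algebra_simps)
      next
        case False
        then have "Z x * h x \<le> t * h x" using elim tnU[of x] by (intro mult_right_mono) auto
        then show ?thesis using False by simp
      qed
    qed
    then have "(\<integral>x. Z x * h x \<partial>M) \<le> (\<integral>x. Z x * indicator U x + t * (h x - indicator U x) \<partial>M)"
      using Zh ZU hi iU by (intro integral_mono_AE) auto
    also have "\<dots> = (\<integral>x. Z x * indicator U x \<partial>M) + t * (integral\<^sup>L M h - measure M U)"
      using ZU hi iU U by (simp add: integral_diff)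
    finally show ?thesis using hint by simp
  qed
qed

section \<open>Layer sums\<close>

lemma decseq_card_ge_set:
  assumes "decseq A" "\<And>k. A k \<subseteq> space M"
  shows "{x\<in>space M. m \<le> card {k\<in>{..<N}. x \<in> A k}} =
    (if m = 0 then space M else if m \<le> N then A (m - 1) else {})"
proof -
  have card_le: "card {k\<in>{..<N}. x \<in> A k} \<le> N" for x
    using card_mono[of "{..<N}" "{k\<in>{..<N}. x \<in> A k}"] by auto
  have iff: "m \<le> card {k\<in>{..<N}. x \<in> A k} \<longleftrightarrow> x \<in> A (m - 1)" if "0 < m" "m \<le> N" for x
  proof
    assume m_le: "m \<le> card {k\<in>{..<N}. x \<in> A k}"
    show "x \<in> A (m - 1)"
    proof (rule ccontr)
      assume x: "x \<notin> A (m - 1)"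
      have "{k\<in>{..<N}. x \<in> A k} \<subseteq> {..<m - 1}"
      proof
        fix k assume "k \<in> {k\<in>{..<N}. x \<in> A k}"
        then have "x \<in> A k" by simp
        then have "\<not> m - 1 \<le> k" using x decseqD[OF \<open>decseq A\<close>, of "m - 1" k] by blast
        then show "k \<in> {..<m - 1}" by simp
      qed
      then have "card {k\<in>{..<N}. x \<in> A k} \<le> card {..<m - 1}"
        by (intro card_mono) auto
      then have "card {k\<in>{..<N}. x \<in> A k} \<le> m - 1" by simp
      then show False using m_le \<open>0 < m\<close> by linarith
    qed
  next
    assume "x \<in> A (m - 1)"
    have "{..<m} \<subseteq> {k\<in>{..<N}. x \<in> A k}"
    proof
      fix k assume "k \<in> {..<m}"
      then have "k \<le> m - 1" "k < N" using \<open>m \<le> N\<close> by auto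
      then show "k \<in> {k\<in>{..<N}. x \<in> A k}"
        using decseqD[OF \<open>decseq A\<close>, of k "m - 1"] \<open>x \<in> A (m - 1)\<close> by auto
    qed
    then have "card {..<m} \<le> card {k\<in>{..<N}. x \<in> A k}"
      by (intro card_mono) auto
    then show "m \<le> card {k\<in>{..<N}. x \<in> A k}" by simp
  qed
  show ?thesis
  proof (cases "m = 0")
    case False
    show ?thesis
    proof (cases "m \<le> N")
      case True
      then show ?thesis using iff \<open>m \<noteq> 0\<close> assms(2) by auto
    next
      case False
      then have "\<not> m \<le> card {k\<in>{..<N}. x \<in> A k}" for x using card_le[of x] by linarith
      then show ?thesis using \<open>m \<noteq> 0\<close> \<open>\<not> m \<le> N\<close> by simp
    qed
  qed simp
qed

lemma measurable_card_decseq: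
  assumes "decseq A" "\<And>k. A k \<in> sets M"
  shows "(\<lambda>x. card {k\<in>{..<N}. x \<in> A k}) \<in> measurable M (count_space UNIV)"
proof -
  define cnt where "cnt x = card {k\<in>{..<N}. x \<in> A k}" for x
  have "cnt -` {m} \<inter> space M = {x\<in>space M. m \<le> cnt x} - {x\<in>space M. Suc m \<le> cnt x}" for m
    by auto
  moreover have "{x\<in>space M. m \<le> cnt x} \<in> sets M" for m
    unfolding cnt_def using assms by (subst decseq_card_ge_set) (auto dest: sets.sets_into_space)
  ultimately show ?thesis
    unfolding measurable_count_space_eq2_countable cnt_def[symmetric] by auto
qed

lemma distr_card_decseq_eq:
  fixes A B :: "nat \<Rightarrow> 'a set"
  assumes "prob_space M" and A: "decseq A" "\<And>k. A k \<in> sets M" and B: "decseq B" "\<And>k. B k \<in> sets M"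
    and eq: "\<And>k. measure M (A k) = measure M (B k)"
  shows "distr M (count_space UNIV) (\<lambda>x. card {k\<in>{..<N}. x \<in> A k})
    = distr M (count_space UNIV) (\<lambda>x. card {k\<in>{..<N}. x \<in> B k})"
proof -
  interpret prob_space M by fact
  define cnt where "cnt A x = card {k\<in>{..<N}. x \<in> A k}" for A :: "nat \<Rightarrow> 'a set" and x
  define ge where "ge A m = {x\<in>space M. m \<le> cnt A x}" for A m
  have ge_eq: "ge A m = (if m = 0 then space M else if m \<le> N then A (m - 1) else {})"
    if "decseq A" "\<And>k. A k \<in> sets M" for A m
    unfolding ge_def cnt_def using that by (intro decseq_card_ge_set) (auto dest: sets.sets_into_space)
  have emeasure_eq: "emeasure (distr M (count_space UNIV) (cnt A)) {m} = emeasure M (ge A m) - emeasure M (ge A (Suc m))"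
    if "decseq A" "\<And>k. A k \<in> sets M" for A m
  proof -
    have "cnt A -` {m} \<inter> space M = ge A m - ge A (Suc m)"
      unfolding ge_def by auto
    moreover have "ge A (Suc m) \<subseteq> ge A m" unfolding ge_def by auto
    moreover have "cnt A \<in> measurable M (count_space UNIV)"
      unfolding cnt_def by (rule measurable_card_decseq[OF that])
    ultimately show ?thesis
      using that(2) by (simp add: emeasure_distr emeasure_Diff ge_eq[OF that])
  qed
  have "emeasure M (ge A m) = emeasure M (ge B m)" for m
    using eq by (simp add: ge_eq A B emeasure_eq_measure)
  then have "distr M (count_space UNIV) (cnt A) = distr M (count_space UNIV) (cnt B)"
    by (intro measure_eqI_countable[where A=UNIV]) (simp_all add: emeasure_eq A B)
  then show ?thesis unfolding cnt_def .
qed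

lemma distr_layer_sum_eq:
  fixes d :: real and A B :: "nat \<Rightarrow> 'a set"
  assumes P: "prob_space M" and A: "decseq A" "\<And>k. A k \<in> sets M" and B: "decseq B" "\<And>k. B k \<in> sets M"
    and eq: "\<And>k. measure M (A k) = measure M (B k)"
  shows "distr M borel (\<lambda>x. \<Sum>k<N. d * indicator (A k) x) = distr M borel (\<lambda>x. \<Sum>k<N. d * indicator (B k) x)"
proof -
  define cnt where "cnt A x = card {k\<in>{..<N}. x \<in> A k}" for A :: "nat \<Rightarrow> 'a set" and x
  \<comment> \<open>the layer sum is a function of the number of layers containing the point\<close>
  have layers: "(\<lambda>x. \<Sum>k<N. d * indicator (A k) x) = (\<lambda>m. d * real m) \<circ> cnt A" for A
  proof
    fix x
    have "(\<Sum>k<N. indicator (A k) x :: real) = real (cnt A x)"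
      by (simp add: cnt_def indicator_def sum.If_cases Int_def)
    moreover have "(\<Sum>k<N. d * indicator (A k) x) = d * (\<Sum>k<N. indicator (A k) x)"
      by (rule sum_distrib_left[symmetric])
    ultimately show "(\<Sum>k<N. d * indicator (A k) x) = ((\<lambda>m. d * real m) \<circ> cnt A) x" by simp
  qed
  have meas: "cnt A \<in> measurable M (count_space UNIV)" if "decseq A" "\<And>k. A k \<in> sets M" for A
    unfolding cnt_def using that by (rule measurable_card_decseq)
  have "distr M borel ((\<lambda>m. d * real m) \<circ> cnt A) = distr (distr M (count_space UNIV) (cnt A)) borel (\<lambda>m. d * real m)"
    "distr M borel ((\<lambda>m. d * real m) \<circ> cnt B) = distr (distr M (count_space UNIV) (cnt B)) borel (\<lambda>m. d * real m)"
    by (simp_all add: distr_distr meas A B)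
  moreover have "distr M (count_space UNIV) (cnt A) = distr M (count_space UNIV) (cnt B)"
    unfolding cnt_def by (rule distr_card_decseq_eq[OF P A B eq])
  ultimately show ?thesis unfolding layers by simp
qed

lemma layer_count_bounds:
  fixes v c :: real
  assumes v: "0 \<le> v" and c: "0 < c"
  shows "(\<Sum>k<N. c * of_bool (real (Suc k) * c \<le> v)) \<le> v"
    and "v \<le> real N * c \<Longrightarrow> v - c \<le> (\<Sum>k<N. c * of_bool (real (Suc k) * c \<le> v))"
proof -
  define m where "m = nat \<lfloor>v / c\<rfloor>"
  have iff: "real (Suc k) * c \<le> v \<longleftrightarrow> k < m" for k
  proof -
    have "real (Suc k) * c \<le> v \<longleftrightarrow> real (Suc k) \<le> v / c" using c by (simp add: pos_le_divide_eq)
    also have "\<dots> \<longleftrightarrow> int (Suc k) \<le> \<lfloor>v / c\<rfloor>" by (simp add: le_floor_iff)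
    also have "\<dots> \<longleftrightarrow> k < m" unfolding m_def by linarith
    finally show ?thesis .
  qed
  have "{..<N} \<inter> {k. real (Suc k) * c \<le> v} = {..<min N m}"
    unfolding iff by auto
  then have "(\<Sum>k<N. of_bool (real (Suc k) * c \<le> v)) = real (min N m)"
    by simp
  then have sum_eq: "(\<Sum>k<N. c * of_bool (real (Suc k) * c \<le> v)) = c * real (min N m)"
    by (simp only: sum_distrib_left[symmetric])
  have m_eq: "real m = of_int \<lfloor>v / c\<rfloor>"
    using v c unfolding m_def by simp
  have m_le: "real m \<le> v / c" and m_ge: "v / c - 1 \<le> real m"
    unfolding m_eq by linarith+
  have "c * real (min N m) \<le> c * (v / c)"
    using m_le c by (intro mult_left_mono) auto
  then show "(\<Sum>k<N. c * of_bool (real (Suc k) * c \<le> v)) \<le> v"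
    using c unfolding sum_eq by simp
  assume "v \<le> real N * c"
  then have "v / c \<le> real N" using c by (simp add: divide_le_eq)
  then have "real m \<le> real N" using m_le by linarith
  then have "min N m = m" by simp
  moreover have "c * (v / c - 1) \<le> c * real m"
    using m_ge c by (intro mult_left_mono) auto
  ultimately show "v - c \<le> (\<Sum>k<N. c * of_bool (real (Suc k) * c \<le> v))"
    using c unfolding sum_eq by (simp add: right_diff_distrib)
qed

lemma layer_sum_tendsto:
  fixes v :: real
  assumes "0 \<le> v"
  shows "(\<lambda>n. \<Sum>k<(n + 1)^2. 1 / (real n + 1) * of_bool (real (Suc k) * (1 / (real n + 1)) \<le> v)) \<longlonglongrightarrow> v"
proof (rule tendsto_sandwich[of "\<lambda>n. v - 1 / (real n + 1)" _ _ "\<lambda>_. v"])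
  obtain n0 where "v \<le> real n0" using real_arch_simple by blast
  have "v - 1 / (real n + 1) \<le> (\<Sum>k<(n + 1)^2. 1 / (real n + 1) * of_bool (real (Suc k) * (1 / (real n + 1)) \<le> v))"
    if "n0 \<le> n" for n
  proof (rule layer_count_bounds(2)[OF assms])
    have "real ((n + 1)^2) * (1 / (real n + 1)) = real n + 1"
      by (simp add: power2_eq_square field_simps)
    then show "v \<le> real ((n + 1)^2) * (1 / (real n + 1))" using \<open>v \<le> real n0\<close> that by simp
  qed simp
  then show "\<forall>\<^sub>F n in sequentially. v - 1 / (real n + 1)
      \<le> (\<Sum>k<(n + 1)^2. 1 / (real n + 1) * of_bool (real (Suc k) * (1 / (real n + 1)) \<le> v))"
    unfolding eventually_sequentially by blast
  show "(\<lambda>n. v - 1 / (real n + 1)) \<longlonglongrightarrow> v"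
    using tendsto_diff[OF tendsto_const LIMSEQ_inverse_real_of_nat_add[of 0]]
    by (simp add: inverse_eq_divide add.commute)
  show "\<forall>\<^sub>F n in sequentially.
      (\<Sum>k<(n + 1)^2. 1 / (real n + 1) * of_bool (real (Suc k) * (1 / (real n + 1)) \<le> v)) \<le> v"
    by (intro always_eventually allI layer_count_bounds(1)[OF assms]) simp
qed simp

section \<open>Coherent utilities\<close>

lemma densitiesD:
  assumes "Z \<in> densities M"
  shows "Z \<in> borel_measurable M" "\<And>x. x \<in> space M \<Longrightarrow> 0 \<le> Z x" "integrable M Z" "integral\<^sup>L M Z = 1"
  using assms unfolding densities_def by auto

lemma determining_set_densities: "determining_set M u \<subseteq> densities M"
  unfolding determining_set_def by auto

lemma coherent_utility_determining_set:
  assumes "coherent_utility M u" "X \<in> borel_measurable M"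
  shows "u X = (INF Z\<in>determining_set M u. EQ M Z X)"
proof -
  obtain D where D: "D \<subseteq> densities M" "\<And>X. X \<in> borel_measurable M \<Longrightarrow> u X = (INF Z\<in>D. EQ M Z X)"
    using assms(1) unfolding coherent_utility_def by blast
  then have "D \<subseteq> determining_set M u"
    unfolding determining_set_def by (auto intro: INF_lower)
  then have "(INF Z\<in>determining_set M u. EQ M Z X) \<le> u X"
    using D(2)[OF assms(2)] by (simp add: INF_superset_mono)
  then show ?thesis
    using assms(2) unfolding determining_set_def by (auto intro!: INF_greatest antisym)
qed

lemma EQ_uminus_nonneg:
  assumes "\<And>x. x \<in> space M \<Longrightarrow> 0 \<le> Z x" "\<And>x. x \<in> space M \<Longrightarrow> 0 \<le> \<xi> x"
  shows "EQ M Z (\<lambda>x. - \<xi> x) = - enn2ereal (\<integral>\<^sup>+ x. ennreal (Z x * \<xi> x) \<partial>M)"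
proof -
  have "(\<integral>\<^sup>+ x. ennreal (Z x * max (- \<xi> x) 0) \<partial>M) = 0"
    using assms(2) by (subst nn_integral_cong[where v="\<lambda>x. 0"]) (auto simp: max_def)
  moreover have "(\<integral>\<^sup>+ x. ennreal (Z x * max (- (- \<xi> x)) 0) \<partial>M) = (\<integral>\<^sup>+ x. ennreal (Z x * \<xi> x) \<partial>M)"
    using assms(2) by (intro nn_integral_cong) (simp add: max_absorb1)
  ultimately show ?thesis unfolding EQ_def Let_def by (auto simp: zero_ennreal.rep_eq)
qed

lemma EQ_eq_integral:
  fixes Q X :: "'a \<Rightarrow> real"
  assumes "AE x in M. 0 \<le> Q x" and int: "integrable M (\<lambda>x. Q x * X x)"
  shows "EQ M Q X = ereal (\<integral>x. Q x * X x \<partial>M)"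
proof -
  have pos: "(\<integral>\<^sup>+ x. ennreal (Q x * max (X x) 0) \<partial>M) = ennreal (\<integral>x. max (Q x * X x) 0 \<partial>M)"
  proof -
    have "AE x in M. Q x * max (X x) 0 = max (Q x * X x) 0"
      using assms(1) by eventually_elim (auto simp: max_def mult_le_0_iff zero_le_mult_iff)
    then show ?thesis
      using int by (subst nn_integral_eq_integral[symmetric]) (auto intro!: nn_integral_cong_AE)
  qed
  have neg: "(\<integral>\<^sup>+ x. ennreal (Q x * max (- X x) 0) \<partial>M) = ennreal (\<integral>x. max (- (Q x * X x)) 0 \<partial>M)"
  proof -
    have "AE x in M. Q x * max (- X x) 0 = max (- (Q x * X x)) 0"
      using assms(1) by eventually_elim (auto simp: max_def mult_le_0_iff zero_le_mult_iff)
    then show ?thesis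
      using int by (subst nn_integral_eq_integral[symmetric]) (auto intro!: nn_integral_cong_AE)
  qed
  have "(\<integral>x. Q x * X x \<partial>M) = (\<integral>x. max (Q x * X x) 0 - max (- (Q x * X x)) 0 \<partial>M)"
    by (intro Bochner_Integration.integral_cong) auto
  also have "\<dots> = (\<integral>x. max (Q x * X x) 0 \<partial>M) - (\<integral>x. max (- (Q x * X x)) 0 \<partial>M)"
    using int by (intro Bochner_Integration.integral_diff) auto
  finally show ?thesis
    unfolding EQ_def Let_def pos neg by simp
qed

text \<open>Law invariance lets the rearrangement \<open>\<xi>'\<close> of \<open>\<xi>\<close> be paired with any single \<open>Z\<close>, since
  \<open>- sup\<^sub>Z \<integral> Z \<xi> = u (- \<xi>) = u (- \<xi>') \<le> - \<integral> Z \<xi>'\<close>.\<close>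
lemma law_invariant_nn_integral_le_SUP:
  assumes cu: "coherent_utility M u" and li: "law_invariant M u"
    and m[measurable]: "\<xi> \<in> borel_measurable M" "\<xi>' \<in> borel_measurable M"
    and nonneg: "\<And>x. x \<in> space M \<Longrightarrow> 0 \<le> \<xi> x" "\<And>x. x \<in> space M \<Longrightarrow> 0 \<le> \<xi>' x"
    and distr: "distr M borel \<xi> = distr M borel \<xi>'"
    and Z: "Z \<in> determining_set M u"
  shows "(\<integral>\<^sup>+ x. ennreal (Z x * \<xi>' x) \<partial>M) \<le> (SUP Z'\<in>determining_set M u. \<integral>\<^sup>+ x. ennreal (Z' x * \<xi> x) \<partial>M)"
    (is "_ \<le> ?S")
proof -
  have "distr M borel (\<lambda>x. - \<xi> x) = distr M borel (\<lambda>x. - \<xi>' x)"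
    using distr_distr[of uminus borel borel \<xi> M] distr_distr[of uminus borel borel \<xi>' M] distr
    by (simp add: comp_def)
  then have "u (\<lambda>x. - \<xi> x) = u (\<lambda>x. - \<xi>' x)"
    using li unfolding law_invariant_def by auto
  moreover have "- enn2ereal ?S \<le> u (\<lambda>x. - \<xi> x)"
    unfolding coherent_utility_determining_set[OF cu, of "\<lambda>x. - \<xi> x", simplified]
  proof (rule INF_greatest)
    fix Z' assume "Z' \<in> determining_set M u"
    then have "EQ M Z' (\<lambda>x. - \<xi> x) = - enn2ereal (\<integral>\<^sup>+ x. ennreal (Z' x * \<xi> x) \<partial>M)"
      using nonneg densitiesD(2)[OF subsetD[OF determining_set_densities]] by (intro EQ_uminus_nonneg)
    moreover have "(\<integral>\<^sup>+ x. ennreal (Z' x * \<xi> x) \<partial>M) \<le> ?S"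
      using \<open>Z' \<in> determining_set M u\<close> by (rule SUP_upper)
    ultimately show "- enn2ereal ?S \<le> EQ M Z' (\<lambda>x. - \<xi> x)"
      by (simp add: less_eq_ennreal.rep_eq)
  qed
  moreover have "u (\<lambda>x. - \<xi>' x) \<le> EQ M Z (\<lambda>x. - \<xi>' x)"
    using Z unfolding determining_set_def by auto
  moreover have "EQ M Z (\<lambda>x. - \<xi>' x) = - enn2ereal (\<integral>\<^sup>+ x. ennreal (Z x * \<xi>' x) \<partial>M)"
    using nonneg densitiesD(2)[OF subsetD[OF determining_set_densities Z]] by (intro EQ_uminus_nonneg)
  ultimately have "- enn2ereal ?S \<le> - enn2ereal (\<integral>\<^sup>+ x. ennreal (Z x * \<xi>' x) \<partial>M)"
    by order
  then show ?thesis by (simp only: ereal_minus_le_minus less_eq_ennreal.rep_eq)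
qed

section \<open>Conditional expectations of densities\<close>

lemma nn_cond_exp_density_indicator_eq:
  fixes Z :: "'a \<Rightarrow> real"
  assumes "prob_space M" and G: "subalgebra M G" and Z: "Z \<in> densities M" and B[measurable]: "B \<in> sets M"
  obtains h where "h \<in> borel_measurable M" "AE x in M. 0 \<le> h x \<and> h x \<le> 1" "integral\<^sup>L M h = measure M B"
    "(\<integral>\<^sup>+ x. nn_cond_exp M G (\<lambda>x. ennreal (Z x)) x * indicator B x \<partial>M) = ennreal (\<integral>x. Z x * h x \<partial>M)"
proof -
  interpret prob_space M by fact
  interpret finite_measure_subalgebra M G by unfold_locales (rule G)
  note Zd = densitiesD[OF Z]
  have [measurable]: "Z \<in> borel_measurable M" by (rule Zd(1))
  define V where "V = nn_cond_exp M G (indicator B)"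
  define h where "h x = enn2real (V x)" for x
  have [measurable]: "V \<in> borel_measurable M" "V \<in> borel_measurable G" "h \<in> borel_measurable M"
    unfolding V_def h_def by auto
  have "AE x in M. V x \<le> nn_cond_exp M G (\<lambda>x. 1) x"
    unfolding V_def by (rule nn_cond_exp_mono) (auto split: split_indicator)
  moreover have "AE x in M. (\<lambda>x. 1::ennreal) x = nn_cond_exp M G (\<lambda>x. 1) x"
    by (rule nn_cond_exp_F_meas) simp
  ultimately have V1: "AE x in M. V x \<le> 1" by eventually_elim simp
  then have Vh: "AE x in M. V x = ennreal (h x)"
    unfolding h_def by eventually_elim (simp add: ennreal_enn2real_if less_top order_le_less_trans)
  have h01: "AE x in M. 0 \<le> h x \<and> h x \<le> 1"
    using V1 unfolding h_def by eventually_elim (auto intro: enn2real_leI)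
  have "(\<integral>\<^sup>+ x. V x \<partial>M) = (\<integral>\<^sup>+ x. indicator B x \<partial>M)"
    using nn_cond_exp_intg[of "\<lambda>x. 1" "indicator B"] unfolding V_def by simp
  then have h_int: "integral\<^sup>L M h = measure M B"
    using h01 Vh by (subst integral_eq_nn_integral) (auto simp: measure_def cong: nn_integral_cong_AE)
  have Zh: "integrable M (\<lambda>x. Z x * h x)"
    using h01 by (intro Bochner_Integration.integrable_bound[OF Zd(3)])
      (auto simp: abs_mult intro!: mult_left_le)
  \<comment> \<open>conditional expectation is self-adjoint\<close>
  have "(\<integral>\<^sup>+ x. nn_cond_exp M G (\<lambda>x. ennreal (Z x)) x * indicator B x \<partial>M)
      = (\<integral>\<^sup>+ x. V x * ennreal (Z x) \<partial>M)"
    using nn_cond_exp_intg[of "nn_cond_exp M G (\<lambda>x. ennreal (Z x))" "indicator B"]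
      nn_cond_exp_intg[of V "\<lambda>x. ennreal (Z x)"]
    unfolding V_def by (simp add: mult.commute)
  also have "\<dots> = (\<integral>\<^sup>+ x. ennreal (Z x * h x) \<partial>M)"
    using Vh by (intro nn_integral_cong_AE) (auto simp: Zd(2) ennreal_mult' mult.commute)
  also have "\<dots> = ennreal (\<integral>x. Z x * h x \<partial>M)"
    using h01 Zh by (intro nn_integral_eq_integral) (auto simp: Zd(2))
  finally show ?thesis using that[of h] h01 h_int by simp
qed

lemma nn_cond_exp_indicator_le_upper_set:
  fixes Z :: "'a \<Rightarrow> real"
  assumes P: "prob_space M" and G: "subalgebra M G" and Z: "Z \<in> densities M"
    and B: "B \<in> sets M" and U: "U \<in> sets M" "upper_set M Z U" "measure M U = measure M B"
  shows "(\<integral>\<^sup>+ x. nn_cond_exp M G (\<lambda>x. ennreal (Z x)) x * indicator B x \<partial>M)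
    \<le> (\<integral>\<^sup>+ x. ennreal (Z x * indicator U x) \<partial>M)"
proof -
  note Zd = densitiesD[OF Z]
  obtain h where h: "h \<in> borel_measurable M" "AE x in M. 0 \<le> h x \<and> h x \<le> 1" "integral\<^sup>L M h = measure M B"
    and eq: "(\<integral>\<^sup>+ x. nn_cond_exp M G (\<lambda>x. ennreal (Z x)) x * indicator B x \<partial>M) = ennreal (\<integral>x. Z x * h x \<partial>M)"
    using nn_cond_exp_density_indicator_eq[OF P G Z B] by blast
  have "(\<integral>x. Z x * h x \<partial>M) \<le> (\<integral>x. Z x * indicator U x \<partial>M)"
    using U h by (intro bathtub_principle[OF P Zd(3)]) (auto simp: Zd(2))
  moreover have "ennreal (\<integral>x. Z x * indicator U x \<partial>M) = (\<integral>\<^sup>+ x. ennreal (Z x * indicator U x) \<partial>M)"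
    using U Zd by (intro nn_integral_eq_integral[symmetric] integrable_real_mult_indicator) auto
  ultimately show ?thesis unfolding eq by (metis ennreal_leI)
qed

lemma nn_integral_cond_exp_layer_sum_le_SUP:
  fixes A :: "nat \<Rightarrow> 'a set" and d :: real
  assumes P: "prob_space M" and al: "atomless M" and cu: "coherent_utility M u" and li: "law_invariant M u"
    and Z: "Z \<in> determining_set M u" and G: "subalgebra M G"
    and A: "decseq A" "\<And>k. A k \<in> sets M" and d: "0 \<le> d"
  shows "(\<integral>\<^sup>+ x. nn_cond_exp M G (\<lambda>x. ennreal (Z x)) x * ennreal (\<Sum>k<N. d * indicator (A k) x) \<partial>M)
    \<le> (SUP Z'\<in>determining_set M u. \<integral>\<^sup>+ x. ennreal (Z' x * (\<Sum>k<N. d * indicator (A k) x)) \<partial>M)"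
proof -
  interpret prob_space M by fact
  interpret finite_measure_subalgebra M G by unfold_locales (rule G)
  have Zd: "Z \<in> densities M" using Z determining_set_densities by blast
  have [measurable]: "Z \<in> borel_measurable M" by (rule densitiesD(1)[OF Zd])
  have "decseq (\<lambda>k. measure M (A k))"
    using A by (auto simp: decseq_def intro!: finite_measure_mono)
  then obtain U where U: "decseq U" "\<And>k. U k \<in> sets M" "\<And>k. upper_set M Z (U k)"
    "\<And>k. measure M (U k) = measure M (A k)"
    using exists_upper_set_chain[OF P al, of Z "\<lambda>k. measure M (A k)"] by auto
  define W where "W = nn_cond_exp M G (\<lambda>x. ennreal (Z x))"
  have [measurable]: "W \<in> borel_measurable M" unfolding W_def by simp
  have ennreal_layers: "ennreal (\<Sum>k<N. d * indicator (B k) x) = (\<Sum>k<N. ennreal d * indicator (B k) x)"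
    for B :: "nat \<Rightarrow> 'a set" and x
    using d by (subst sum_ennreal[symmetric]) (auto simp: ennreal_mult ennreal_indicator)
  have "(\<integral>\<^sup>+ x. W x * ennreal (\<Sum>k<N. d * indicator (A k) x) \<partial>M)
      = (\<Sum>k<N. ennreal d * (\<integral>\<^sup>+ x. W x * indicator (A k) x \<partial>M))"
    unfolding ennreal_layers sum_distrib_left
    using A by (subst nn_integral_sum) (auto simp: nn_integral_cmult[symmetric] ac_simps)
  also have "\<dots> \<le> (\<Sum>k<N. ennreal d * (\<integral>\<^sup>+ x. ennreal (Z x * indicator (U k) x) \<partial>M))"
    unfolding W_def using A U
    by (intro sum_mono mult_left_mono nn_cond_exp_indicator_le_upper_set[OF P G Zd]) auto
  also have "\<dots> = (\<integral>\<^sup>+ x. ennreal (Z x * (\<Sum>k<N. d * indicator (U k) x)) \<partial>M)"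
  proof -
    have pointwise: "ennreal (Z x * (\<Sum>k<N. d * indicator (U k) x)) = (\<Sum>k<N. ennreal d * ennreal (Z x * indicator (U k) x))"
      if "x \<in> space M" for x
    proof -
      have "ennreal (Z x * (\<Sum>k<N. d * indicator (U k) x)) = ennreal (Z x) * (\<Sum>k<N. ennreal d * indicator (U k) x)"
        using densitiesD(2)[OF Zd that] d unfolding ennreal_layers[symmetric]
        by (intro ennreal_mult sum_nonneg) auto
      also have "\<dots> = (\<Sum>k<N. ennreal d * ennreal (Z x * indicator (U k) x))"
        unfolding sum_distrib_left using densitiesD(2)[OF Zd that]
        by (intro sum.cong) (auto simp: ennreal_mult indicator_def mult.commute)
      finally show ?thesis .
    qed
    then show ?thesis
      using U by (subst nn_integral_cong[OF pointwise]) (auto simp: nn_integral_sum nn_integral_cmult)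
  qed
  also have "\<dots> \<le> (SUP Z'\<in>determining_set M u. \<integral>\<^sup>+ x. ennreal (Z' x * (\<Sum>k<N. d * indicator (A k) x)) \<partial>M)"
    using A U d Z
    by (intro law_invariant_nn_integral_le_SUP[OF cu li] distr_layer_sum_eq[OF P]) (auto intro!: sum_nonneg)
  finally show ?thesis unfolding W_def .
qed

lemma nn_integral_mult_le_of_tendsto:
  fixes f :: "nat \<Rightarrow> 'a \<Rightarrow> real" and W :: "'a \<Rightarrow> ennreal"
  assumes [measurable]: "W \<in> borel_measurable M" "\<And>n. f n \<in> borel_measurable M"
    and fin: "AE x in M. W x < \<top>" and lim: "\<And>x. x \<in> space M \<Longrightarrow> (\<lambda>n. f n x) \<longlonglongrightarrow> g x"
    and bound: "\<And>n. (\<integral>\<^sup>+ x. W x * ennreal (f n x) \<partial>M) \<le> S"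
  shows "(\<integral>\<^sup>+ x. W x * ennreal (g x) \<partial>M) \<le> S"
proof -
  have "AE x in M. W x * ennreal (g x) = liminf (\<lambda>n. W x * ennreal (f n x))"
    using fin AE_space
  proof eventually_elim
    case (elim x)
    then have "(\<lambda>n. W x * ennreal (f n x)) \<longlonglongrightarrow> W x * ennreal (g x)"
      by (intro ennreal_tendsto_cmult tendsto_ennrealI lim) auto
    then show ?case by (simp add: lim_imp_Liminf)
  qed
  then have "(\<integral>\<^sup>+ x. W x * ennreal (g x) \<partial>M) = (\<integral>\<^sup>+ x. liminf (\<lambda>n. W x * ennreal (f n x)) \<partial>M)"
    by (rule nn_integral_cong_AE)
  also have "\<dots> \<le> liminf (\<lambda>n. \<integral>\<^sup>+ x. W x * ennreal (f n x) \<partial>M)"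
    by (intro nn_integral_liminf) simp
  also have "\<dots> \<le> S"
    using bound by (intro Liminf_le) auto
  finally show ?thesis .
qed

lemma AE_nn_cond_exp_density_finite:
  assumes "prob_space M" "subalgebra M G" "Z \<in> densities M"
  shows "AE x in M. nn_cond_exp M G (\<lambda>x. ennreal (Z x)) x < \<top>"
proof -
  interpret prob_space M by fact
  interpret finite_measure_subalgebra M G by unfold_locales (rule assms(2))
  note Zd = densitiesD[OF assms(3)]
  have "(\<integral>\<^sup>+ x. nn_cond_exp M G (\<lambda>x. ennreal (Z x)) x \<partial>M) = (\<integral>\<^sup>+ x. ennreal (Z x) \<partial>M)"
    using nn_cond_exp_intg[of "\<lambda>x. 1" "\<lambda>x. ennreal (Z x)"] Zd(1) by simp
  also have "\<dots> < \<top>"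
    using Zd by (simp add: nn_integral_eq_integral)
  finally show ?thesis
    using nn_integral_noteq_infinite[of "nn_cond_exp M G (\<lambda>x. ennreal (Z x))" M] by (simp add: less_top)
qed

lemma nn_integral_cond_exp_le_SUP:
  fixes \<xi> :: "'a \<Rightarrow> real"
  assumes P: "prob_space M" and al: "atomless M" and cu: "coherent_utility M u" and li: "law_invariant M u"
    and Z: "Z \<in> determining_set M u" and G: "subalgebra M G"
    and \<xi>[measurable]: "\<xi> \<in> borel_measurable M" and \<xi>_nonneg: "\<And>x. x \<in> space M \<Longrightarrow> 0 \<le> \<xi> x"
  shows "(\<integral>\<^sup>+ x. nn_cond_exp M G (\<lambda>x. ennreal (Z x)) x * ennreal (\<xi> x) \<partial>M)
    \<le> (SUP Z'\<in>determining_set M u. \<integral>\<^sup>+ x. ennreal (Z' x * \<xi> x) \<partial>M)" (is "_ \<le> ?S")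
proof -
  interpret prob_space M by fact
  interpret finite_measure_subalgebra M G by unfold_locales (rule G)
  have Zd: "Z \<in> densities M" using Z determining_set_densities by blast
  have [measurable]: "Z \<in> borel_measurable M" by (rule densitiesD(1)[OF Zd])
  define W where "W = nn_cond_exp M G (\<lambda>x. ennreal (Z x))"
  have [measurable]: "W \<in> borel_measurable M" unfolding W_def by simp
  define c where "c n = 1 / (real n + 1)" for n
  define A where "A n k = {x\<in>space M. real (Suc k) * c n \<le> \<xi> x}" for n k
  define \<xi>n where "\<xi>n n x = (\<Sum>k<(n + 1)^2. c n * indicator (A n k) x)" for n x
  have c: "0 < c n" for n by (simp add: c_def)
  have A_sets: "A n k \<in> sets M" for n k unfolding A_def by measurable
  have A_dec: "decseq (A n)" for n
    using c[of n] by (intro decseq_SucI) (auto simp: A_def intro: order_trans[rotated])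
  have \<xi>n_eq: "\<xi>n n x = (\<Sum>k<(n + 1)^2. c n * of_bool (real (Suc k) * c n \<le> \<xi> x))" if "x \<in> space M" for n x
    using that by (simp add: \<xi>n_def A_def indicator_def)
  have \<xi>n_le: "\<xi>n n x \<le> \<xi> x" if "x \<in> space M" for n x
    using layer_count_bounds(1)[OF \<xi>_nonneg[OF that] c] that by (simp add: \<xi>n_eq)
  have \<xi>n_tendsto: "(\<lambda>n. \<xi>n n x) \<longlonglongrightarrow> \<xi> x" if "x \<in> space M" for x
    using layer_sum_tendsto[OF \<xi>_nonneg[OF that]] that by (simp add: \<xi>n_eq c_def)
  have step: "(\<integral>\<^sup>+ x. W x * ennreal (\<xi>n n x) \<partial>M) \<le> ?S" for n
  proof -
    have "(\<integral>\<^sup>+ x. W x * ennreal (\<xi>n n x) \<partial>M)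
        \<le> (SUP Z'\<in>determining_set M u. \<integral>\<^sup>+ x. ennreal (Z' x * \<xi>n n x) \<partial>M)"
      unfolding W_def \<xi>n_def
      by (rule nn_integral_cond_exp_layer_sum_le_SUP[OF P al cu li Z G A_dec A_sets]) (use c in \<open>simp add: less_imp_le\<close>)
    also have "\<dots> \<le> ?S"
      using \<xi>n_le densitiesD(2)[OF subsetD[OF determining_set_densities]]
      by (intro SUP_subset_mono order_refl nn_integral_mono ennreal_leI mult_left_mono) auto
    finally show ?thesis .
  qed
  show ?thesis
    unfolding W_def[symmetric]
  proof (rule nn_integral_mult_le_of_tendsto[OF _ _ _ \<xi>n_tendsto step])
    show "AE x in M. W x < \<top>"
      unfolding W_def by (rule AE_nn_cond_exp_density_finite[OF P G Zd])
  qed (use A_sets in \<open>simp_all add: \<xi>n_def\<close>)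
qed

lemma L1s_SUP_nn_integral_finite:
  assumes "D \<subseteq> densities M" and "X \<in> L1s M D"
  shows "(SUP Z\<in>D. \<integral>\<^sup>+ x. ennreal (Z x * \<bar>X x\<bar>) \<partial>M) < \<infinity>"
proof -
  define T where "T n x = (if \<bar>X x\<bar> > real n then \<bar>X x\<bar> else 0)" for n x
  have [measurable]: "X \<in> borel_measurable M" using assms(2) by (simp add: L1s_def)
  have "(\<lambda>n. SUP Z\<in>D. \<integral>\<^sup>+ x. ennreal (Z x * T n x) \<partial>M) \<longlonglongrightarrow> 0"
    using assms(2) by (simp add: L1s_def T_def)
  then have "\<forall>\<^sub>F n in sequentially. (SUP Z\<in>D. \<integral>\<^sup>+ x. ennreal (Z x * T n x) \<partial>M) < 1"
    by (rule order_tendstoD) simp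
  then obtain n where n: "(SUP Z\<in>D. \<integral>\<^sup>+ x. ennreal (Z x * T n x) \<partial>M) < 1"
    by (auto simp: eventually_sequentially)
  have "(\<integral>\<^sup>+ x. ennreal (Z x * \<bar>X x\<bar>) \<partial>M) \<le> ennreal (real n + 1)" if "Z \<in> D" for Z
  proof -
    note Zd = densitiesD[OF subsetD[OF assms(1) that]]
    have [measurable]: "Z \<in> borel_measurable M" by (rule Zd(1))
    have "(\<integral>\<^sup>+ x. ennreal (Z x * \<bar>X x\<bar>) \<partial>M)
        \<le> (\<integral>\<^sup>+ x. ennreal (Z x * real n) + ennreal (Z x * T n x) \<partial>M)"
      using Zd(2) by (intro nn_integral_mono)
        (auto simp: T_def ennreal_plus[symmetric] distrib_left[symmetric] intro!: ennreal_leI mult_left_mono)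
    also have "\<dots> = (\<integral>\<^sup>+ x. ennreal (Z x * real n) \<partial>M) + (\<integral>\<^sup>+ x. ennreal (Z x * T n x) \<partial>M)"
      by (rule nn_integral_add) (auto simp: T_def)
    also have "(\<integral>\<^sup>+ x. ennreal (Z x * real n) \<partial>M) = ennreal (real n)"
      using Zd by (subst nn_integral_eq_integral) auto
    also have "(\<integral>\<^sup>+ x. ennreal (Z x * T n x) \<partial>M) \<le> 1"
      using n SUP_upper[OF that, of "\<lambda>Z. \<integral>\<^sup>+ x. ennreal (Z x * T n x) \<partial>M"] by order
    finally show ?thesis by (simp add: ennreal_plus add_left_mono)
  qed
  then have "(SUP Z\<in>D. \<integral>\<^sup>+ x. ennreal (Z x * \<bar>X x\<bar>) \<partial>M) \<le> ennreal (real n + 1)"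
    by (rule SUP_least)
  then show ?thesis using le_less_trans by fastforce
qed

lemma nn_integral_cond_exp_abs_finite:
  assumes "prob_space M" "atomless M" "coherent_utility M u" "law_invariant M u" "subalgebra M G"
    and X: "X \<in> L1s M (determining_set M u)" and Z: "Z \<in> determining_set M u"
  shows "(\<integral>\<^sup>+ x. nn_cond_exp M G (\<lambda>x. ennreal (Z x)) x * ennreal \<bar>X x\<bar> \<partial>M) < \<infinity>"
proof -
  have "(\<integral>\<^sup>+ x. nn_cond_exp M G (\<lambda>x. ennreal (Z x)) x * ennreal \<bar>X x\<bar> \<partial>M)
      \<le> (SUP Z'\<in>determining_set M u. \<integral>\<^sup>+ x. ennreal (Z' x * \<bar>X x\<bar>) \<partial>M)"
    using X Z by (intro nn_integral_cond_exp_le_SUP[OF assms(1-4) _ assms(5)]) (auto simp: L1s_def)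
  also have "\<dots> < \<infinity>"
    by (rule L1s_SUP_nn_integral_finite[OF determining_set_densities X])
  finally show ?thesis .
qed

lemma integrable_real_cond_exp_density_mult:
  fixes Z X :: "'a \<Rightarrow> real"
  assumes "prob_space M" "subalgebra M G" "Z \<in> densities M" and [measurable]: "X \<in> borel_measurable M"
    and fin: "(\<integral>\<^sup>+ x. nn_cond_exp M G (\<lambda>x. ennreal (Z x)) x * ennreal \<bar>X x\<bar> \<partial>M) < \<infinity>"
  shows "integrable M (\<lambda>x. real_cond_exp M G Z x * X x)"
proof (rule integrableI_bounded)
  interpret prob_space M by fact
  interpret finite_measure_subalgebra M G by unfold_locales (rule assms(2))
  note Zd = densitiesD[OF assms(3)]
  have "AE x in M. nn_cond_exp M G (\<lambda>x. ennreal \<bar>Z x\<bar>) x = nn_cond_exp M G (\<lambda>x. ennreal (Z x)) x"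
    using Zd by (intro nn_cond_exp_cong AE_I2) auto
  then have "AE x in M. ennreal (norm (real_cond_exp M G Z x * X x))
      \<le> nn_cond_exp M G (\<lambda>x. ennreal (Z x)) x * ennreal \<bar>X x\<bar>"
    using real_cond_exp_abs[OF Zd(1)]
    by eventually_elim (auto simp: abs_mult ennreal_mult intro!: mult_right_mono)
  then have "(\<integral>\<^sup>+ x. ennreal (norm (real_cond_exp M G Z x * X x)) \<partial>M)
      \<le> (\<integral>\<^sup>+ x. nn_cond_exp M G (\<lambda>x. ennreal (Z x)) x * ennreal \<bar>X x\<bar> \<partial>M)"
    by (rule nn_integral_mono_AE)
  then show "(\<integral>\<^sup>+ x. ennreal (norm (real_cond_exp M G Z x * X x)) \<partial>M) < \<infinity>" using fin by order
  show "(\<lambda>x. real_cond_exp M G Z x * X x) \<in> borel_measurable M" by simp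
qed

lemma integrable_density_mult_real_cond_exp:
  fixes Z X :: "'a \<Rightarrow> real"
  assumes "prob_space M" "subalgebra M G" "Z \<in> densities M" and X[measurable]: "X \<in> borel_measurable M"
    and fin: "(\<integral>\<^sup>+ x. nn_cond_exp M G (\<lambda>x. ennreal (Z x)) x * ennreal \<bar>X x\<bar> \<partial>M) < \<infinity>"
  shows "integrable M (\<lambda>x. Z x * real_cond_exp M G X x)"
proof (rule integrableI_bounded)
  interpret prob_space M by fact
  interpret finite_measure_subalgebra M G by unfold_locales (rule assms(2))
  note Zd = densitiesD[OF assms(3)]
  have [measurable]: "Z \<in> borel_measurable M" by (rule Zd(1))
  define V where "V = nn_cond_exp M G (\<lambda>x. ennreal \<bar>X x\<bar>)"
  have [measurable]: "V \<in> borel_measurable G" unfolding V_def by simp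
  have "(\<integral>\<^sup>+ x. ennreal (norm (Z x * real_cond_exp M G X x)) \<partial>M) \<le> (\<integral>\<^sup>+ x. V x * ennreal (Z x) \<partial>M)"
    using real_cond_exp_abs[OF X] AE_space unfolding V_def
    by (intro nn_integral_mono_AE, eventually_elim)
      (auto simp: Zd(2) abs_mult ennreal_mult' mult.commute intro!: mult_left_mono)
  also have "\<dots> = (\<integral>\<^sup>+ x. V x * nn_cond_exp M G (\<lambda>x. ennreal (Z x)) x \<partial>M)"
    by (rule nn_cond_exp_intg[symmetric]) auto
  also have "\<dots> = (\<integral>\<^sup>+ x. nn_cond_exp M G (\<lambda>x. ennreal (Z x)) x * ennreal \<bar>X x\<bar> \<partial>M)"
    unfolding V_def by (subst mult.commute) (rule nn_cond_exp_intg; simp)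
  finally show "(\<integral>\<^sup>+ x. ennreal (norm (Z x * real_cond_exp M G X x)) \<partial>M) < \<infinity>" using fin by order
  show "(\<lambda>x. Z x * real_cond_exp M G X x) \<in> borel_measurable M" by simp
qed

lemma EQ_real_cond_exp_swap:
  fixes Z X :: "'a \<Rightarrow> real"
  assumes P: "prob_space M" and G: "subalgebra M G" and Z: "Z \<in> densities M"
    and X: "X \<in> borel_measurable M"
    and fin: "(\<integral>\<^sup>+ x. nn_cond_exp M G (\<lambda>x. ennreal (Z x)) x * ennreal \<bar>X x\<bar> \<partial>M) < \<infinity>"
  shows "EQ M (real_cond_exp M G Z) X = EQ M Z (real_cond_exp M G X)"
proof -
  interpret prob_space M by fact
  interpret finite_measure_subalgebra M G by unfold_locales (rule G)
  note Zd = densitiesD[OF Z]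
  note QX = integrable_real_cond_exp_density_mult[OF P G Z X fin]
  note ZW = integrable_density_mult_real_cond_exp[OF P G Z X fin]
  have "AE x in M. 0 \<le> real_cond_exp M G Z x"
    using Zd by (intro real_cond_exp_pos AE_I2) auto
  moreover have "(\<integral>x. real_cond_exp M G Z x * X x \<partial>M) = (\<integral>x. Z x * real_cond_exp M G X x \<partial>M)"
  proof -
    have "(\<integral>x. real_cond_exp M G Z x * X x \<partial>M) = (\<integral>x. real_cond_exp M G Z x * real_cond_exp M G X x \<partial>M)"
      using X by (intro real_cond_exp_intg(2)[OF QX, symmetric]) simp_all
    also have "\<dots> = (\<integral>x. Z x * real_cond_exp M G X x \<partial>M)"
      using real_cond_exp_intg(2)[of "real_cond_exp M G X" Z] ZW Zd(1) by (simp add: mult.commute)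
    finally show ?thesis .
  qed
  ultimately show ?thesis
    using QX ZW Zd(2) by (simp add: EQ_eq_integral AE_I2)
qed

theorem corollary3p5:
  fixes M :: "'a measure" and u :: "('a \<Rightarrow> real) \<Rightarrow> ereal"
    and Y :: "'a \<Rightarrow> 'b::euclidean_space" and X :: "'a \<Rightarrow> real"
  assumes "prob_space M"
    and "atomless M"
    and "coherent_utility M u"
    and "law_invariant M u"
    and "Y \<in> borel_measurable M"
    and "X \<in> L1s M (determining_set M u)"
  shows "factor_utility M (determining_set M u) X Y = u (cond_exp_given M Y X)"
proof -
  define G where "G = vimage_algebra (space M) Y borel"
  define D where "D = determining_set M u"
  have G: "subalgebra M G"
    using assms(5) unfolding subalgebra_def G_def measurable_iff_sets by simp
  have X: "X \<in> borel_measurable M" using assms(6) by (simp add: L1s_def)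
  have "EQ M (real_cond_exp M G Z) X = EQ M Z (real_cond_exp M G X)" if "Z \<in> D" for Z
    using that determining_set_densities unfolding D_def
    by (intro EQ_real_cond_exp_swap[OF assms(1) G _ X] nn_integral_cond_exp_abs_finite[OF assms(1-4) G assms(6)]) auto
  then have "factor_utility M D X Y = (INF Z\<in>D. EQ M Z (real_cond_exp M G X))"
    unfolding factor_utility_def cond_exp_given_def G_def by (simp add: image_comp)
  also have "\<dots> = u (real_cond_exp M G X)"
    unfolding D_def by (rule coherent_utility_determining_set[OF assms(3), symmetric]) simp
  finally show ?thesis unfolding D_def cond_exp_given_def G_def .
qed

end
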